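(* Let $A$ be a finite-dimensional $k$-algebra and $Y\in\operatorname{mod}A$ such that every short exact sequence $0\to X\to Y'\to S\to0$ with $Y'$ a submodule of $Y$ and $S$ a simple $A$-module is perfect exact. Then $Y^\ast=0$ if and only if $S^\ast=0$ for every composition factor $S$ of $Y$.
   Context: $\operatorname{mod}A$ finitely generated right modules; $(-)^\ast=\operatorname{Hom}_A(-,A)$. A short exact sequence $0\to X\to Y\to Z\to0$ is perfect exact if $0\to Z^\ast\to Y^\ast\to X^\ast\to0$ is exact. *)

theory Defs
  imports "HOL-Algebra.Embedded_Algebras" "HOL-Library.FuncSet"
begin

definition fd_algebra :: "'a set \<Rightarrow> ('a, 'b) ring_scheme \<Rightarrow> bool" where
  "fd_algebra k A \<longleftrightarrow> ring A \<and> subfield k A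
     \<and> (\<forall>c\<in>k. \<forall>a\<in>carrier A. c \<otimes>\<^bsub>A\<^esub> a = a \<otimes>\<^bsub>A\<^esub> c)
     \<and> ring.finite_dimension A k (carrier A)"

record ('m, 'a) rmod =
  mcarrier :: "'m set"
  madd :: "'m \<Rightarrow> 'm \<Rightarrow> 'm"
  mzero :: 'm
  mact :: "'m \<Rightarrow> 'a \<Rightarrow> 'm"

definition rmodule :: "('a, 'b) ring_scheme \<Rightarrow> ('m, 'a) rmod \<Rightarrow> bool" where
  "rmodule A M \<longleftrightarrow> ring A
     \<and> mzero M \<in> mcarrier M
     \<and> (\<forall>x\<in>mcarrier M. \<forall>y\<in>mcarrier M. madd M x y \<in> mcarrier M)
     \<and> (\<forall>x\<in>mcarrier M. \<forall>y\<in>mcarrier M. \<forall>z\<in>mcarrier M.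
           madd M (madd M x y) z = madd M x (madd M y z))
     \<and> (\<forall>x\<in>mcarrier M. \<forall>y\<in>mcarrier M. madd M x y = madd M y x)
     \<and> (\<forall>x\<in>mcarrier M. madd M (mzero M) x = x)
     \<and> (\<forall>x\<in>mcarrier M. \<exists>y\<in>mcarrier M. madd M x y = mzero M)
     \<and> (\<forall>x\<in>mcarrier M. \<forall>a\<in>carrier A. mact M x a \<in> mcarrier M)
     \<and> (\<forall>x\<in>mcarrier M. \<forall>y\<in>mcarrier M. \<forall>a\<in>carrier A.
           mact M (madd M x y) a = madd M (mact M x a) (mact M y a))
     \<and> (\<forall>x\<in>mcarrier M. \<forall>a\<in>carrier A. \<forall>b\<in>carrier A.
           mact M x (a \<oplus>\<^bsub>A\<^esub> b) = madd M (mact M x a) (mact M x b))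
     \<and> (\<forall>x\<in>mcarrier M. \<forall>a\<in>carrier A. \<forall>b\<in>carrier A.
           mact M x (a \<otimes>\<^bsub>A\<^esub> b) = mact M (mact M x a) b)
     \<and> (\<forall>x\<in>mcarrier M. mact M x \<one>\<^bsub>A\<^esub> = x)"

text \<open>Submodules (closure under the action by -1 gives closure under negation).\<close>

definition submod :: "('a, 'b) ring_scheme \<Rightarrow> ('m, 'a) rmod \<Rightarrow> 'm set \<Rightarrow> bool" where
  "submod A M N \<longleftrightarrow> N \<subseteq> mcarrier M \<and> mzero M \<in> N
     \<and> (\<forall>x\<in>N. \<forall>y\<in>N. madd M x y \<in> N)
     \<and> (\<forall>x\<in>N. \<forall>a\<in>carrier A. mact M x a \<in> N)"

definition restr :: "('m, 'a) rmod \<Rightarrow> 'm set \<Rightarrow> ('m, 'a) rmod" where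
  "restr M N = M\<lparr>mcarrier := N\<rparr>"

definition fin_gen :: "('a, 'b) ring_scheme \<Rightarrow> ('m, 'a) rmod \<Rightarrow> bool" where
  "fin_gen A M \<longleftrightarrow> (\<exists>G. finite G \<and> G \<subseteq> mcarrier M
      \<and> (\<forall>N. submod A M N \<and> G \<subseteq> N \<longrightarrow> N = mcarrier M))"

definition modA :: "('a, 'b) ring_scheme \<Rightarrow> ('m, 'a) rmod \<Rightarrow> bool" where
  "modA A M \<longleftrightarrow> rmodule A M \<and> fin_gen A M"

definition simple_mod :: "('a, 'b) ring_scheme \<Rightarrow> ('m, 'a) rmod \<Rightarrow> bool" where
  "simple_mod A M \<longleftrightarrow> rmodule A M \<and> mcarrier M \<noteq> {mzero M}
     \<and> (\<forall>N. submod A M N \<longrightarrow> N = {mzero M} \<or> N = mcarrier M)"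

definition mcoset :: "('m, 'a) rmod \<Rightarrow> 'm set \<Rightarrow> 'm \<Rightarrow> 'm set" where
  "mcoset M N x = {madd M x n | n. n \<in> N}"

definition quot :: "('m, 'a) rmod \<Rightarrow> 'm set \<Rightarrow> ('m set, 'a) rmod" where
  "quot M N = \<lparr> mcarrier = mcoset M N ` mcarrier M,
                madd = (\<lambda>X Y. {madd M x y | x y. x \<in> X \<and> y \<in> Y}),
                mzero = N,
                mact = (\<lambda>X a. \<Union>x\<in>X. mcoset M N (mact M x a)) \<rparr>"

definition rhom :: "('a, 'b) ring_scheme \<Rightarrow> ('m, 'a) rmod \<Rightarrow> ('n, 'a) rmod \<Rightarrow> ('m \<Rightarrow> 'n) \<Rightarrow> bool" where
  "rhom A M N f \<longleftrightarrow> (\<forall>x\<in>mcarrier M. f x \<in> mcarrier N)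
     \<and> (\<forall>x\<in>mcarrier M. \<forall>y\<in>mcarrier M. f (madd M x y) = madd N (f x) (f y))
     \<and> (\<forall>x\<in>mcarrier M. \<forall>a\<in>carrier A. f (mact M x a) = mact N (f x) a)"

definition regmod :: "('a, 'b) ring_scheme \<Rightarrow> ('a, 'a) rmod" where
  "regmod A = \<lparr> mcarrier = carrier A, madd = (\<oplus>\<^bsub>A\<^esub>), mzero = \<zero>\<^bsub>A\<^esub>, mact = (\<otimes>\<^bsub>A\<^esub>) \<rparr>"

text \<open>M^* = Hom_A(M, A), with homomorphisms represented extensionally on the carrier.\<close>

definition dual :: "('a, 'b) ring_scheme \<Rightarrow> ('m, 'a) rmod \<Rightarrow> ('m \<Rightarrow> 'a) set" where
  "dual A M = {f. rhom A M (regmod A) f \<and> f \<in> extensional (mcarrier M)}"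

definition dual_zero_elem :: "('a, 'b) ring_scheme \<Rightarrow> ('m, 'a) rmod \<Rightarrow> 'm \<Rightarrow> 'a" where
  "dual_zero_elem A M = (\<lambda>x\<in>mcarrier M. \<zero>\<^bsub>A\<^esub>)"

definition dual_is_zero :: "('a, 'b) ring_scheme \<Rightarrow> ('m, 'a) rmod \<Rightarrow> bool" where
  "dual_is_zero A M \<longleftrightarrow> dual A M = {dual_zero_elem A M}"

definition dual_map :: "('m, 'a) rmod \<Rightarrow> ('m \<Rightarrow> 'n) \<Rightarrow> ('n \<Rightarrow> 'a) \<Rightarrow> ('m \<Rightarrow> 'a)" where
  "dual_map M f = (\<lambda>\<phi>. \<lambda>x\<in>mcarrier M. \<phi> (f x))"

definition short_exact ::
  "('a, 'b) ring_scheme \<Rightarrow> ('x, 'a) rmod \<Rightarrow> ('y, 'a) rmod \<Rightarrow> ('z, 'a) rmod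
     \<Rightarrow> ('x \<Rightarrow> 'y) \<Rightarrow> ('y \<Rightarrow> 'z) \<Rightarrow> bool" where
  "short_exact A X Y Z f g \<longleftrightarrow> rhom A X Y f \<and> rhom A Y Z g
     \<and> inj_on f (mcarrier X)
     \<and> g ` mcarrier Y = mcarrier Z
     \<and> f ` mcarrier X = {y \<in> mcarrier Y. g y = mzero Z}"

definition perfect_exact ::
  "('a, 'b) ring_scheme \<Rightarrow> ('x, 'a) rmod \<Rightarrow> ('y, 'a) rmod \<Rightarrow> ('z, 'a) rmod
     \<Rightarrow> ('x \<Rightarrow> 'y) \<Rightarrow> ('y \<Rightarrow> 'z) \<Rightarrow> bool" where
  "perfect_exact A X Y Z f g \<longleftrightarrow> short_exact A X Y Z f g
     \<and> inj_on (dual_map Y g) (dual A Z)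
     \<and> dual_map Y g ` dual A Z = {\<psi> \<in> dual A Y. dual_map X f \<psi> = dual_zero_elem A X}
     \<and> dual_map X f ` dual A Y = dual A X"

definition comp_series :: "('a, 'b) ring_scheme \<Rightarrow> ('m, 'a) rmod \<Rightarrow> (nat \<Rightarrow> 'm set) \<Rightarrow> nat \<Rightarrow> bool" where
  "comp_series A Y c n \<longleftrightarrow> c 0 = {mzero Y} \<and> c n = mcarrier Y
     \<and> (\<forall>i\<le>n. submod A Y (c i))
     \<and> (\<forall>i<n. c i \<subseteq> c (Suc i) \<and> simple_mod A (quot (restr Y (c (Suc i))) (c i)))"

text \<open>The composition factors of Y are (up to isomorphism) the factors of a composition series.\<close>

definition comp_factor_dual_zero :: "('a, 'b) ring_scheme \<Rightarrow> ('m, 'a) rmod \<Rightarrow> bool" where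
  "comp_factor_dual_zero A Y \<longleftrightarrow> (\<forall>c n i. comp_series A Y c n \<and> i < n
       \<longrightarrow> dual_is_zero A (quot (restr Y (c (Suc i))) (c i)))"

end

theory Submission
  imports Defs
begin

(*
  Since A is finite-dimensional over the central subfield k and Y is finitely generated, Y is
  finite-dimensional over k; a submodule strictly between two others lowers the k-codimension,
  so Y has a composition series 0 = Y_0 < ... < Y_n = Y.  By hypothesis each sequence
  0 -> Y_i -> Y_(i+1) -> S_i -> 0 with S_i = Y_(i+1)/Y_i is perfect exact, i.e. restriction
  Y_(i+1)^* -> Y_i^* is onto and S_i^* -> Y_(i+1)^* is injective with image its kernel.
  If Y^* = 0, descending induction gives Y_i^* = 0 for all i, and then S_i^* embeds into
  Y_(i+1)^* = 0.  Conversely, if all S_i^* = 0, ascending induction from Y_0^* = 0 gives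
  Y_(i+1)^* = 0: a form vanishing on Y_i comes from S_i^* = 0.
*)

section \<open>Right modules, submodules and quotients\<close>

locale right_module =
  fixes A :: "('a, 'b) ring_scheme" and M :: "('m, 'a) rmod"
  assumes rmodule: "rmodule A M"
begin

abbreviation zero_M ("\<zero>\<^sub>M") where "\<zero>\<^sub>M \<equiv> mzero M"
abbreviation add_M (infixl "+\<^sub>M" 65) where "(+\<^sub>M) \<equiv> madd M"
abbreviation act_M (infixl "\<cdot>" 70) where "(\<cdot>) \<equiv> mact M"

lemma ring: "ring A"
  using rmodule unfolding rmodule_def by auto

lemma zero_closed [simp]: "\<zero>\<^sub>M \<in> mcarrier M"
  using rmodule unfolding rmodule_def by auto

lemma add_closed [simp]: "x \<in> mcarrier M \<Longrightarrow> y \<in> mcarrier M \<Longrightarrow> x +\<^sub>M y \<in> mcarrier M"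
  using rmodule unfolding rmodule_def by auto

lemma add_assoc:
  "x \<in> mcarrier M \<Longrightarrow> y \<in> mcarrier M \<Longrightarrow> z \<in> mcarrier M \<Longrightarrow> x +\<^sub>M y +\<^sub>M z = x +\<^sub>M (y +\<^sub>M z)"
  using rmodule unfolding rmodule_def by auto

lemma add_commute: "x \<in> mcarrier M \<Longrightarrow> y \<in> mcarrier M \<Longrightarrow> x +\<^sub>M y = y +\<^sub>M x"
  using rmodule unfolding rmodule_def by auto

lemma add_zero_left [simp]: "x \<in> mcarrier M \<Longrightarrow> \<zero>\<^sub>M +\<^sub>M x = x"
  using rmodule unfolding rmodule_def by auto

lemma add_zero_right [simp]: "x \<in> mcarrier M \<Longrightarrow> x +\<^sub>M \<zero>\<^sub>M = x"
  using add_commute add_zero_left zero_closed by metis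

lemma add_inverse_ex: "x \<in> mcarrier M \<Longrightarrow> \<exists>y\<in>mcarrier M. x +\<^sub>M y = \<zero>\<^sub>M"
  using rmodule unfolding rmodule_def by (simp only: Ball_def)

lemma act_closed [simp]: "x \<in> mcarrier M \<Longrightarrow> a \<in> carrier A \<Longrightarrow> x \<cdot> a \<in> mcarrier M"
  using rmodule unfolding rmodule_def by auto

lemma add_act_distrib:
  "x \<in> mcarrier M \<Longrightarrow> y \<in> mcarrier M \<Longrightarrow> a \<in> carrier A \<Longrightarrow> (x +\<^sub>M y) \<cdot> a = x \<cdot> a +\<^sub>M y \<cdot> a"
  using rmodule unfolding rmodule_def by auto

lemma act_add_distrib:
  "x \<in> mcarrier M \<Longrightarrow> a \<in> carrier A \<Longrightarrow> b \<in> carrier A \<Longrightarrow> x \<cdot> (a \<oplus>\<^bsub>A\<^esub> b) = x \<cdot> a +\<^sub>M x \<cdot> b"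
  using rmodule unfolding rmodule_def by auto

lemma act_mult:
  "x \<in> mcarrier M \<Longrightarrow> a \<in> carrier A \<Longrightarrow> b \<in> carrier A \<Longrightarrow> x \<cdot> (a \<otimes>\<^bsub>A\<^esub> b) = x \<cdot> a \<cdot> b"
  using rmodule unfolding rmodule_def by auto

lemma act_one [simp]: "x \<in> mcarrier M \<Longrightarrow> x \<cdot> \<one>\<^bsub>A\<^esub> = x"
  using rmodule unfolding rmodule_def by auto

lemma add_left_cancel:
  assumes "x \<in> mcarrier M" "y \<in> mcarrier M" "z \<in> mcarrier M" "x +\<^sub>M y = x +\<^sub>M z"
  shows "y = z"
proof -
  obtain x' where x': "x' \<in> mcarrier M" "x +\<^sub>M x' = \<zero>\<^sub>M"
    using add_inverse_ex assms(1) by blast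
  have "x' +\<^sub>M (x +\<^sub>M y) = x' +\<^sub>M (x +\<^sub>M z)"
    using assms by simp
  then show ?thesis
    using x' assms by (metis add_assoc add_commute add_zero_left)
qed

lemma act_zero [simp]: "x \<in> mcarrier M \<Longrightarrow> x \<cdot> \<zero>\<^bsub>A\<^esub> = \<zero>\<^sub>M"
proof -
  assume x: "x \<in> mcarrier M"
  interpret R: ring A by (rule ring)
  have "x \<cdot> \<zero>\<^bsub>A\<^esub> +\<^sub>M x \<cdot> \<zero>\<^bsub>A\<^esub> = x \<cdot> \<zero>\<^bsub>A\<^esub> +\<^sub>M \<zero>\<^sub>M"
    using act_add_distrib[OF x, of "\<zero>\<^bsub>A\<^esub>" "\<zero>\<^bsub>A\<^esub>"] x by simp
  then show ?thesis
    using add_left_cancel[of "x \<cdot> \<zero>\<^bsub>A\<^esub>"] x by simp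
qed

lemma zero_act [simp]: "a \<in> carrier A \<Longrightarrow> \<zero>\<^sub>M \<cdot> a = \<zero>\<^sub>M"
proof -
  assume a: "a \<in> carrier A"
  have "\<zero>\<^sub>M \<cdot> a +\<^sub>M \<zero>\<^sub>M \<cdot> a = \<zero>\<^sub>M \<cdot> a +\<^sub>M \<zero>\<^sub>M"
    using add_act_distrib[of "\<zero>\<^sub>M" "\<zero>\<^sub>M" a] a by simp
  then show ?thesis
    using add_left_cancel[of "\<zero>\<^sub>M \<cdot> a"] a by simp
qed

lemma act_add_act_uminus:
  assumes "x \<in> mcarrier M" "a \<in> carrier A"
  shows "x \<cdot> a +\<^sub>M x \<cdot> (\<ominus>\<^bsub>A\<^esub> a) = \<zero>\<^sub>M"
proof -
  interpret R: ring A by (rule ring)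
  show ?thesis
    using act_add_distrib[OF assms, of "\<ominus>\<^bsub>A\<^esub> a"] assms by (simp add: R.r_neg)
qed

lemma add_add_swap:
  assumes "w \<in> mcarrier M" "x \<in> mcarrier M" "y \<in> mcarrier M" "z \<in> mcarrier M"
  shows "(w +\<^sub>M x) +\<^sub>M (y +\<^sub>M z) = (w +\<^sub>M y) +\<^sub>M (x +\<^sub>M z)"
  using assms by (metis add_assoc add_closed add_commute)

lemma submodD:
  assumes "submod A M N"
  shows "N \<subseteq> mcarrier M" "\<zero>\<^sub>M \<in> N" "\<And>x y. x \<in> N \<Longrightarrow> y \<in> N \<Longrightarrow> x +\<^sub>M y \<in> N"
    "\<And>x a. x \<in> N \<Longrightarrow> a \<in> carrier A \<Longrightarrow> x \<cdot> a \<in> N"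
  using assms unfolding submod_def by blast+

lemma submod_carrier: "submod A M (mcarrier M)"
  unfolding submod_def by simp

lemma submod_zero: "submod A M {\<zero>\<^sub>M}"
  unfolding submod_def by simp

lemma submod_inverse_ex:
  assumes N: "submod A M N" and x: "x \<in> N"
  shows "\<exists>y\<in>N. x +\<^sub>M y = \<zero>\<^sub>M"
proof -
  interpret R: ring A by (rule ring)
  have "x \<in> mcarrier M" using submodD(1)[OF N] x by blast
  then have "x +\<^sub>M x \<cdot> (\<ominus>\<^bsub>A\<^esub> \<one>\<^bsub>A\<^esub>) = \<zero>\<^sub>M"
    using act_add_act_uminus[of x "\<one>\<^bsub>A\<^esub>"] by simp
  moreover have "x \<cdot> (\<ominus>\<^bsub>A\<^esub> \<one>\<^bsub>A\<^esub>) \<in> N"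
    using submodD(4)[OF N x] by simp
  ultimately show ?thesis by blast
qed

lemma restr_simps [simp]:
  "mcarrier (restr M N) = N" "madd (restr M N) = madd M" "mact (restr M N) = mact M"
  "mzero (restr M N) = \<zero>\<^sub>M"
  unfolding restr_def by simp_all

lemma restr_carrier [simp]: "restr M (mcarrier M) = M"
  unfolding restr_def by simp

lemma submod_restr_iff:
  "N \<subseteq> mcarrier M \<Longrightarrow> submod A (restr M N) L \<longleftrightarrow> L \<subseteq> N \<and> submod A M L"
  unfolding submod_def restr_def by auto

lemma rmodule_restr:
  assumes N: "submod A M N"
  shows "rmodule A (restr M N)"
proof -
  have "N \<subseteq> mcarrier M" using submodD(1)[OF N] .
  then show ?thesis
    unfolding rmodule_def restr_simps
    using ring submodD[OF N] submod_inverse_ex[OF N] add_assoc add_commute add_act_distrib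
      act_add_distrib act_mult
    by (simp add: subset_iff)
qed

abbreviation coset :: "'m set \<Rightarrow> 'm \<Rightarrow> 'm set" where
  "coset N \<equiv> mcoset M N"

lemma coset_restr [simp]: "mcoset (restr M P) N = coset N"
  unfolding mcoset_def restr_def by simp

lemma coset_self:
  assumes "submod A M N" "x \<in> mcarrier M"
  shows "x \<in> coset N x"
proof -
  have "x = x +\<^sub>M \<zero>\<^sub>M" using assms by simp
  then show ?thesis using submodD(2)[OF assms(1)] unfolding mcoset_def by blast
qed

lemma coset_add_eq:
  assumes N: "submod A M N" and x: "x \<in> mcarrier M" and n: "n \<in> N"
  shows "coset N (x +\<^sub>M n) = coset N x"
proof
  have NM: "N \<subseteq> mcarrier M" using submodD(1)[OF N] .
  show "coset N (x +\<^sub>M n) \<subseteq> coset N x"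
  proof
    fix w assume "w \<in> coset N (x +\<^sub>M n)"
    then obtain m where m: "m \<in> N" "w = x +\<^sub>M n +\<^sub>M m" unfolding mcoset_def by blast
    then have "w = x +\<^sub>M (n +\<^sub>M m)" using x n NM by (simp add: add_assoc subsetD)
    then show "w \<in> coset N x" using submodD(3)[OF N n m(1)] unfolding mcoset_def by blast
  qed
  show "coset N x \<subseteq> coset N (x +\<^sub>M n)"
  proof
    fix w assume "w \<in> coset N x"
    then obtain m where m: "m \<in> N" "w = x +\<^sub>M m" unfolding mcoset_def by blast
    obtain n' where n': "n' \<in> N" "n +\<^sub>M n' = \<zero>\<^sub>M" using submod_inverse_ex[OF N n] by blast
    have "x +\<^sub>M n +\<^sub>M (n' +\<^sub>M m) = x +\<^sub>M ((n +\<^sub>M n') +\<^sub>M m)"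
      using x n n'(1) m(1) NM by (simp add: add_assoc subsetD)
    also have "\<dots> = w" using n' m NM by (simp add: subsetD)
    finally have "w = x +\<^sub>M n +\<^sub>M (n' +\<^sub>M m)" ..
    then show "w \<in> coset N (x +\<^sub>M n)" using submodD(3)[OF N n'(1) m(1)] unfolding mcoset_def by blast
  qed
qed

lemma coset_zero: "submod A M N \<Longrightarrow> coset N \<zero>\<^sub>M = N"
  unfolding mcoset_def using submodD(1) by force

lemma coset_eq_zero_iff:
  assumes N: "submod A M N" and x: "x \<in> mcarrier M"
  shows "coset N x = N \<longleftrightarrow> x \<in> N"
proof
  assume "coset N x = N"
  then show "x \<in> N" using coset_self[OF N x] by simp
next
  assume "x \<in> N"
  then show "coset N x = N" using coset_add_eq[OF N zero_closed, of x] coset_zero[OF N] x by simp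
qed

lemma coset_add:
  assumes N: "submod A M N" and x: "x \<in> mcarrier M" and y: "y \<in> mcarrier M"
  shows "{u +\<^sub>M v |u v. u \<in> coset N x \<and> v \<in> coset N y} = coset N (x +\<^sub>M y)"
proof
  have NM: "N \<subseteq> mcarrier M" using submodD(1)[OF N] .
  show "{u +\<^sub>M v |u v. u \<in> coset N x \<and> v \<in> coset N y} \<subseteq> coset N (x +\<^sub>M y)"
  proof
    fix w assume "w \<in> {u +\<^sub>M v |u v. u \<in> coset N x \<and> v \<in> coset N y}"
    then obtain n m where nm: "n \<in> N" "m \<in> N" "w = (x +\<^sub>M n) +\<^sub>M (y +\<^sub>M m)"
      unfolding mcoset_def by blast
    then have "w = (x +\<^sub>M y) +\<^sub>M (n +\<^sub>M m)" using add_add_swap x y NM by blast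
    then show "w \<in> coset N (x +\<^sub>M y)" using submodD(3)[OF N nm(1,2)] unfolding mcoset_def by blast
  qed
  show "coset N (x +\<^sub>M y) \<subseteq> {u +\<^sub>M v |u v. u \<in> coset N x \<and> v \<in> coset N y}"
  proof
    fix w assume "w \<in> coset N (x +\<^sub>M y)"
    then obtain n where n: "n \<in> N" "w = x +\<^sub>M y +\<^sub>M n" unfolding mcoset_def by blast
    then have "w = x +\<^sub>M (y +\<^sub>M n)" using x y NM by (simp add: add_assoc subsetD)
    moreover have "y +\<^sub>M n \<in> coset N y" using n unfolding mcoset_def by blast
    ultimately show "w \<in> {u +\<^sub>M v |u v. u \<in> coset N x \<and> v \<in> coset N y}"
      using coset_self[OF N x] by blast
  qed
qed

lemma coset_act:
  assumes N: "submod A M N" and x: "x \<in> mcarrier M" and a: "a \<in> carrier A"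
  shows "(\<Union>w\<in>coset N x. coset N (w \<cdot> a)) = coset N (x \<cdot> a)"
proof
  show "(\<Union>w\<in>coset N x. coset N (w \<cdot> a)) \<subseteq> coset N (x \<cdot> a)"
  proof
    fix v assume "v \<in> (\<Union>w\<in>coset N x. coset N (w \<cdot> a))"
    then obtain n where n: "n \<in> N" "v \<in> coset N ((x +\<^sub>M n) \<cdot> a)"
      unfolding mcoset_def by blast
    have "n \<in> mcarrier M" using n submodD(1)[OF N] by blast
    then have "(x +\<^sub>M n) \<cdot> a = x \<cdot> a +\<^sub>M n \<cdot> a" using x a by (simp add: add_act_distrib)
    then show "v \<in> coset N (x \<cdot> a)"
      using n coset_add_eq[OF N _ submodD(4)[OF N n(1) a]] x a by simp
  qed
qed (use coset_self[OF N x] in blast)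

lemma quot_add:
  assumes "submod A M N" "x \<in> mcarrier M" "y \<in> mcarrier M"
  shows "madd (quot (restr M P) N) (coset N x) (coset N y) = coset N (x +\<^sub>M y)"
  using coset_add[OF assms] unfolding quot_def by simp

lemma quot_act:
  assumes "submod A M N" "x \<in> mcarrier M" "a \<in> carrier A"
  shows "mact (quot (restr M P) N) (coset N x) a = coset N (x \<cdot> a)"
  using coset_act[OF assms] unfolding quot_def by simp

lemma quot_carrier: "mcarrier (quot (restr M P) N) = coset N ` P"
  unfolding quot_def by simp

lemma quot_zero: "mzero (quot (restr M P) N) = N"
  unfolding quot_def by simp

lemma rmodule_quot:
  assumes N: "submod A M N" and P: "submod A M P"
  shows "rmodule A (quot (restr M P) N)"
proof -
  let ?Q = "quot (restr M P) N"
  have PM: "\<And>x. x \<in> P \<Longrightarrow> x \<in> mcarrier M" using submodD(1)[OF P] by blast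
  have car: "mcarrier ?Q = coset N ` P" by (rule quot_carrier)
  have add: "\<And>x y. x \<in> P \<Longrightarrow> y \<in> P \<Longrightarrow> madd ?Q (coset N x) (coset N y) = coset N (x +\<^sub>M y)"
    using quot_add[OF N] PM by blast
  have act: "\<And>x a. x \<in> P \<Longrightarrow> a \<in> carrier A \<Longrightarrow> mact ?Q (coset N x) a = coset N (x \<cdot> a)"
    using quot_act[OF N] PM by blast
  have zero: "mzero ?Q = coset N \<zero>\<^sub>M" using quot_zero coset_zero[OF N] by simp
  note closed = submodD(2-4)[OF P]
  interpret R: ring A by (rule ring)
  show ?thesis unfolding rmodule_def
  proof (intro conjI ballI)
    show "ring A" by (rule ring)
    show "mzero ?Q \<in> mcarrier ?Q" using zero car closed by simp
  next
    fix X Z assume "X \<in> mcarrier ?Q" "Z \<in> mcarrier ?Q"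
    then obtain x y where "x \<in> P" "y \<in> P" "X = coset N x" "Z = coset N y" using car by auto
    then show "madd ?Q X Z \<in> mcarrier ?Q" "madd ?Q X Z = madd ?Q Z X"
      using add closed car add_commute[OF PM PM] by simp_all
  next
    fix X Z W assume "X \<in> mcarrier ?Q" "Z \<in> mcarrier ?Q" "W \<in> mcarrier ?Q"
    then obtain x y w where "x \<in> P" "y \<in> P" "w \<in> P" "X = coset N x" "Z = coset N y" "W = coset N w"
      using car by auto
    then show "madd ?Q (madd ?Q X Z) W = madd ?Q X (madd ?Q Z W)"
      using add closed PM by (simp add: add_assoc)
  next
    fix X assume "X \<in> mcarrier ?Q"
    then obtain x where x: "x \<in> P" "X = coset N x" using car by auto
    then show "madd ?Q (mzero ?Q) X = X" "mact ?Q X \<one>\<^bsub>A\<^esub> = X"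
      using add act closed zero PM by simp_all
    have "madd ?Q X (coset N (x \<cdot> (\<ominus>\<^bsub>A\<^esub> \<one>\<^bsub>A\<^esub>))) = mzero ?Q"
      using act_add_act_uminus[of x "\<one>\<^bsub>A\<^esub>"] add x closed zero PM by simp
    moreover have "coset N (x \<cdot> (\<ominus>\<^bsub>A\<^esub> \<one>\<^bsub>A\<^esub>)) \<in> mcarrier ?Q" using car closed x by simp
    ultimately show "\<exists>Z\<in>mcarrier ?Q. madd ?Q X Z = mzero ?Q" by blast
  next
    fix X a assume "X \<in> mcarrier ?Q" "a \<in> carrier A"
    then show "mact ?Q X a \<in> mcarrier ?Q" using act closed car by auto
  next
    fix X Z a assume "X \<in> mcarrier ?Q" "Z \<in> mcarrier ?Q" "a \<in> carrier A"
    then obtain x y where "x \<in> P" "y \<in> P" "X = coset N x" "Z = coset N y" using car by auto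
    then show "mact ?Q (madd ?Q X Z) a = madd ?Q (mact ?Q X a) (mact ?Q Z a)"
      using add act closed PM \<open>a \<in> carrier A\<close> by (simp add: add_act_distrib)
  next
    fix X a b assume "X \<in> mcarrier ?Q" "a \<in> carrier A" "b \<in> carrier A"
    then obtain x where "x \<in> P" "X = coset N x" using car by auto
    then show "mact ?Q X (a \<oplus>\<^bsub>A\<^esub> b) = madd ?Q (mact ?Q X a) (mact ?Q X b)"
      and "mact ?Q X (a \<otimes>\<^bsub>A\<^esub> b) = mact ?Q (mact ?Q X a) b"
      using add act closed PM \<open>a \<in> carrier A\<close> \<open>b \<in> carrier A\<close>
      by (simp_all add: act_add_distrib act_mult)
  qed
qed

lemma submod_quot_preimage:
  assumes N: "submod A M N" and P: "submod A M P" and NP: "N \<subseteq> P"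
    and Q: "submod A (quot (restr M P) N) Q"
  shows "submod A M {x \<in> P. coset N x \<in> Q}" and "N \<subseteq> {x \<in> P. coset N x \<in> Q}"
proof -
  let ?R = "{x \<in> P. coset N x \<in> Q}"
  have PM: "\<And>x. x \<in> P \<Longrightarrow> x \<in> mcarrier M" using submodD(1)[OF P] by blast
  have zero: "N \<in> Q" using Q quot_zero unfolding submod_def by simp
  show "submod A M ?R" unfolding submod_def
  proof (intro conjI ballI)
    show "?R \<subseteq> mcarrier M" using PM by blast
    show "\<zero>\<^sub>M \<in> ?R" using submodD(2)[OF P] zero coset_zero[OF N] by simp
  next
    fix x y assume "x \<in> ?R" "y \<in> ?R"
    then have "madd (quot (restr M P) N) (coset N x) (coset N y) \<in> Q"
      using Q unfolding submod_def by blast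
    then show "x +\<^sub>M y \<in> ?R"
      using quot_add[OF N PM PM] submodD(3)[OF P] \<open>x \<in> ?R\<close> \<open>y \<in> ?R\<close>
      by simp
  next
    fix x a assume "x \<in> ?R" "a \<in> carrier A"
    then have "mact (quot (restr M P) N) (coset N x) a \<in> Q"
      using Q unfolding submod_def by blast
    then show "x \<cdot> a \<in> ?R"
      using quot_act[OF N PM] submodD(4)[OF P] \<open>x \<in> ?R\<close> \<open>a \<in> carrier A\<close>
      by simp
  qed
  show "N \<subseteq> ?R"
  proof
    fix x assume "x \<in> N"
    with NP have "x \<in> P" by blast
    moreover from this \<open>x \<in> N\<close> have "coset N x = N" using coset_eq_zero_iff[OF N PM] by blast
    ultimately show "x \<in> ?R" using zero by simp
  qed
qed

lemma simple_quot_if_maximal: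
  assumes N: "submod A M N" and P: "submod A M P" and NP: "N \<subset> P"
    and maximal: "\<And>R. submod A M R \<Longrightarrow> N \<subseteq> R \<Longrightarrow> R \<subseteq> P \<Longrightarrow> R = N \<or> R = P"
  shows "simple_mod A (quot (restr M P) N)"
proof -
  let ?Q = "quot (restr M P) N"
  have PM: "\<And>x. x \<in> P \<Longrightarrow> x \<in> mcarrier M" using submodD(1)[OF P] by blast
  obtain x where x: "x \<in> P" "x \<notin> N" using NP by blast
  have "coset N x \<in> mcarrier ?Q" using x(1) quot_carrier by simp
  moreover have "coset N x \<noteq> mzero ?Q" using x coset_eq_zero_iff[OF N PM] quot_zero by simp
  ultimately have nontrivial: "mcarrier ?Q \<noteq> {mzero ?Q}" by blast
  have "Q = {mzero ?Q} \<or> Q = mcarrier ?Q" if Q: "submod A ?Q Q" for Q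
  proof -
    let ?R = "{x \<in> P. coset N x \<in> Q}"
    have QP: "Q \<subseteq> coset N ` P" and zero: "N \<in> Q"
      using Q quot_carrier[of P N] quot_zero[of P N] unfolding submod_def by simp_all
    have "?R \<subseteq> P" by blast
    then have "?R = N \<or> ?R = P"
      using maximal submod_quot_preimage[OF N P _ Q] NP by blast
    then show ?thesis
    proof
      assume RN: "?R = N"
      have "X = N" if "X \<in> Q" for X
      proof -
        obtain y where y: "y \<in> P" "X = coset N y" using QP \<open>X \<in> Q\<close> by blast
        then have "y \<in> N" using RN \<open>X \<in> Q\<close> by blast
        then show "X = N" using y coset_eq_zero_iff[OF N PM] by blast
      qed
      then have "Q = {N}" using zero by blast
      then show ?thesis using quot_zero by simp
    next
      assume "?R = P"
      then have "coset N ` P \<subseteq> Q" by blast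
      then show ?thesis using QP quot_carrier by simp
    qed
  qed
  then show ?thesis
    unfolding simple_mod_def using rmodule_quot[OF N P] nontrivial by blast
qed

lemma submod_quot_image:
  assumes N: "submod A M N" and R: "submod A M R" and RP: "R \<subseteq> P"
  shows "submod A (quot (restr M P) N) (coset N ` R)"
  unfolding submod_def
proof (intro conjI ballI)
  have RM: "\<And>x. x \<in> R \<Longrightarrow> x \<in> mcarrier M" using submodD(1)[OF R] by blast
  show "coset N ` R \<subseteq> mcarrier (quot (restr M P) N)" using RP quot_carrier by (simp add: image_mono)
  have "coset N \<zero>\<^sub>M \<in> coset N ` R" using submodD(2)[OF R] by blast
  then show "mzero (quot (restr M P) N) \<in> coset N ` R"
    using coset_zero[OF N] quot_zero by simp
  show "madd (quot (restr M P) N) U V \<in> coset N ` R" if UV: "U \<in> coset N ` R" "V \<in> coset N ` R" for U V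
  proof -
    obtain u v where "u \<in> R" "v \<in> R" "U = coset N u" "V = coset N v" using UV by blast
    then show ?thesis using quot_add[OF N RM RM] submodD(3)[OF R] by simp
  qed
  show "mact (quot (restr M P) N) U a \<in> coset N ` R" if U: "U \<in> coset N ` R" and a: "a \<in> carrier A" for U a
  proof -
    obtain u where "u \<in> R" "U = coset N u" using U by blast
    then show ?thesis using quot_act[OF N RM] submodD(4)[OF R] a by simp
  qed
qed

lemma fin_gen_restr_if_simple_quot:
  assumes N: "submod A M N" and P: "submod A M P" and NP: "N \<subseteq> P"
    and fgN: "fin_gen A (restr M N)" and simple: "simple_mod A (quot (restr M P) N)"
  shows "fin_gen A (restr M P)"
proof -
  let ?Q = "quot (restr M P) N"
  have PM: "P \<subseteq> mcarrier M" and NM: "N \<subseteq> mcarrier M" using submodD(1) N P by auto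
  obtain G where G: "finite G" "G \<subseteq> N"
    and genN: "\<And>L. submod A (restr M N) L \<Longrightarrow> G \<subseteq> L \<Longrightarrow> L = N"
    using fgN unfolding fin_gen_def restr_simps by blast
  have "mcarrier ?Q \<noteq> {mzero ?Q}" "mzero ?Q \<in> mcarrier ?Q"
    using simple unfolding simple_mod_def rmodule_def by blast+
  then obtain X where "X \<in> mcarrier ?Q" "X \<noteq> N" using quot_zero by blast
  then obtain x where x: "x \<in> P" "coset N x \<noteq> N" using quot_carrier by auto
  have "R = P" if R: "submod A (restr M P) R" and xGR: "insert x G \<subseteq> R" for R
  proof
    show RP: "R \<subseteq> P" using R submod_restr_iff[OF PM] by blast
    have RM: "submod A M R" using R submod_restr_iff[OF PM] by blast
    have "submod A M (R \<inter> N)" using RM N unfolding submod_def by auto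
    then have "submod A (restr M N) (R \<inter> N)" using submod_restr_iff[OF NM] by blast
    then have "R \<inter> N = N" using genN xGR G(2) by blast
    then have NR: "N \<subseteq> R" by blast
    have "coset N ` R \<noteq> {mzero ?Q}" using x xGR quot_zero by auto
    then have "coset N ` R = mcarrier ?Q"
      using simple submod_quot_image[OF N RM RP] unfolding simple_mod_def by blast
    then have image_eq: "coset N ` R = coset N ` P" using quot_carrier by simp
    show "P \<subseteq> R"
    proof
      fix y assume "y \<in> P"
      then obtain r where r: "r \<in> R" "coset N y = coset N r" using image_eq by blast
      then have "y \<in> coset N r" using coset_self[OF N] PM \<open>y \<in> P\<close> by blast
      then obtain n where "n \<in> N" "y = r +\<^sub>M n" unfolding mcoset_def by blast
      then show "y \<in> R" using submodD(3)[OF RM r(1)] NR by blast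
    qed
  qed
  moreover have "finite (insert x G)" "insert x G \<subseteq> P" using G x NP by auto
  ultimately show ?thesis unfolding fin_gen_def restr_simps by blast
qed

lemma comp_series_fin_gen:
  assumes c: "comp_series A M c n" and "i \<le> n"
  shows "fin_gen A (restr M (c i))"
  using \<open>i \<le> n\<close>
proof (induction i)
  case 0
  have "fin_gen A (restr M {\<zero>\<^sub>M})"
    unfolding fin_gen_def restr_def submod_def by auto
  then show ?case using c unfolding comp_series_def by simp
next
  case (Suc i)
  then show ?case
    using fin_gen_restr_if_simple_quot[of "c i" "c (Suc i)"] c unfolding comp_series_def by auto
qed

lemma short_exact_quot:
  assumes N: "submod A M N" and P: "submod A M P" and NP: "N \<subseteq> P"
  shows "short_exact A (restr M N) (restr M P) (quot (restr M P) N) id (coset N)"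
  unfolding short_exact_def
proof (intro conjI)
  have PM: "\<And>x. x \<in> P \<Longrightarrow> x \<in> mcarrier M" using submodD(1)[OF P] by blast
  show "rhom A (restr M N) (restr M P) id" unfolding rhom_def using NP by auto
  show "rhom A (restr M P) (quot (restr M P) N) (coset N)"
    unfolding rhom_def using quot_carrier quot_add[OF N PM PM] quot_act[OF N PM] by simp
  show "coset N ` mcarrier (restr M P) = mcarrier (quot (restr M P) N)"
    using quot_carrier by simp
  show "id ` mcarrier (restr M N) = {y \<in> mcarrier (restr M P). coset N y = mzero (quot (restr M P) N)}"
    using coset_eq_zero_iff[OF N PM] NP quot_zero by auto
qed simp

end

section \<open>Existence of composition series\<close>

locale right_module_over_subfield = right_module A M
  for A :: "('a, 'b) ring_scheme" and M :: "('m, 'a) rmod" +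
  fixes k :: "'a set"
  assumes subfield: "subfield k A"
begin

lemma k_subset: "k \<subseteq> carrier A"
  using subfieldE(3)[OF subfield] .

lemma k_closed:
  "\<zero>\<^bsub>A\<^esub> \<in> k" "\<one>\<^bsub>A\<^esub> \<in> k" "c \<in> k \<Longrightarrow> \<ominus>\<^bsub>A\<^esub> c \<in> k"
  "c \<in> k \<Longrightarrow> d \<in> k \<Longrightarrow> c \<oplus>\<^bsub>A\<^esub> d \<in> k" "c \<in> k \<Longrightarrow> d \<in> k \<Longrightarrow> c \<otimes>\<^bsub>A\<^esub> d \<in> k"
  using subringE(2,3,5,7,6)[OF subfieldE(1)[OF subfield]] by blast+

definition k_subspace :: "'m set \<Rightarrow> bool" where
  "k_subspace B \<longleftrightarrow> B \<subseteq> mcarrier M \<and> \<zero>\<^sub>M \<in> B \<and> (\<forall>x\<in>B. \<forall>y\<in>B. x +\<^sub>M y \<in> B)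
     \<and> (\<forall>x\<in>B. \<forall>c\<in>k. x \<cdot> c \<in> B)"

lemma submod_k_subspace: "submod A M N \<Longrightarrow> k_subspace N"
  unfolding submod_def k_subspace_def using k_subset by blast

lemma k_subspace_zero: "k_subspace {\<zero>\<^sub>M}"
  unfolding k_subspace_def using k_subset by auto

fun kspan :: "'m set \<Rightarrow> 'm list \<Rightarrow> 'm set" where
  "kspan B [] = B"
| "kspan B (u # us) = {u \<cdot> c +\<^sub>M v | c v. c \<in> k \<and> v \<in> kspan B us}"

lemma kspan_ConsI: "c \<in> k \<Longrightarrow> v \<in> kspan B us \<Longrightarrow> u \<cdot> c +\<^sub>M v \<in> kspan B (u # us)"
  by auto

lemma kspan_ConsE:
  "x \<in> kspan B (u # us) \<Longrightarrow> (\<And>c v. c \<in> k \<Longrightarrow> v \<in> kspan B us \<Longrightarrow> x = u \<cdot> c +\<^sub>M v \<Longrightarrow> P) \<Longrightarrow> P"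
  by auto

declare kspan.simps(2) [simp del]

lemma k_subspace_kspan:
  assumes B: "k_subspace B" and us: "set us \<subseteq> mcarrier M"
  shows "k_subspace (kspan B us)"
  using us
proof (induction us)
  case Nil
  then show ?case using B by simp
next
  case (Cons u us)
  then have u: "u \<in> mcarrier M" and IH: "k_subspace (kspan B us)" by auto
  let ?L = "kspan B (u # us)"
  have sub: "\<And>v. v \<in> kspan B us \<Longrightarrow> v \<in> mcarrier M" using IH unfolding k_subspace_def by auto
  have "?L \<subseteq> mcarrier M"
  proof
    fix x assume "x \<in> ?L"
    then obtain c v where "c \<in> k" "v \<in> kspan B us" "x = u \<cdot> c +\<^sub>M v" by (rule kspan_ConsE)
    then show "x \<in> mcarrier M" using sub u k_subset by auto
  qed
  moreover have "\<zero>\<^sub>M \<in> ?L"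
  proof -
    have "\<zero>\<^sub>M = u \<cdot> \<zero>\<^bsub>A\<^esub> +\<^sub>M \<zero>\<^sub>M" using u by simp
    moreover have "\<zero>\<^sub>M \<in> kspan B us" using IH unfolding k_subspace_def by blast
    ultimately show ?thesis using kspan_ConsI[OF k_closed(1), of "\<zero>\<^sub>M" B us u] by simp
  qed
  moreover have "x +\<^sub>M y \<in> ?L" if x: "x \<in> ?L" and y: "y \<in> ?L" for x y
  proof -
    obtain c v where cv: "c \<in> k" "v \<in> kspan B us" "x = u \<cdot> c +\<^sub>M v" using x by (rule kspan_ConsE)
    obtain d w where dw: "d \<in> k" "w \<in> kspan B us" "y = u \<cdot> d +\<^sub>M w" using y by (rule kspan_ConsE)
    have "c \<in> carrier A" "d \<in> carrier A" using cv dw k_subset by auto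
    then have "x +\<^sub>M y = u \<cdot> (c \<oplus>\<^bsub>A\<^esub> d) +\<^sub>M (v +\<^sub>M w)"
      using cv dw u sub add_add_swap[of "u \<cdot> c" v "u \<cdot> d" w] act_add_distrib[of u c d] by simp
    moreover have "v +\<^sub>M w \<in> kspan B us" using IH cv dw unfolding k_subspace_def by auto
    ultimately show "x +\<^sub>M y \<in> ?L" using k_closed(4)[OF cv(1) dw(1)] kspan_ConsI by simp
  qed
  moreover have "x \<cdot> d \<in> ?L" if x: "x \<in> ?L" and d: "d \<in> k" for x d
  proof -
    obtain c v where cv: "c \<in> k" "v \<in> kspan B us" "x = u \<cdot> c +\<^sub>M v" using x by (rule kspan_ConsE)
    have "x \<cdot> d = u \<cdot> (c \<otimes>\<^bsub>A\<^esub> d) +\<^sub>M v \<cdot> d"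
      using cv u sub k_subset d by (simp add: add_act_distrib act_mult subsetD)
    moreover have "v \<cdot> d \<in> kspan B us" using IH cv d unfolding k_subspace_def by auto
    ultimately show "x \<cdot> d \<in> ?L" using k_closed(5)[OF cv(1) d] kspan_ConsI by simp
  qed
  ultimately show ?case unfolding k_subspace_def by blast
qed

lemma kspan_subset_carrier:
  assumes "k_subspace B" "set us \<subseteq> mcarrier M"
  shows "kspan B us \<subseteq> mcarrier M"
  using k_subspace_kspan[OF assms] unfolding k_subspace_def by (elim conjE)

lemma kspan_subset_kspan_Cons:
  assumes B: "k_subspace B" and us: "set us \<subseteq> mcarrier M" and u: "u \<in> mcarrier M"
  shows "kspan B us \<subseteq> kspan B (u # us)"
proof
  fix x assume x: "x \<in> kspan B us"
  then have "x \<in> mcarrier M" using kspan_subset_carrier[OF B us] by blast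
  then have "x = u \<cdot> \<zero>\<^bsub>A\<^esub> +\<^sub>M x" using u by simp
  then show "x \<in> kspan B (u # us)" using x kspan_ConsI[OF k_closed(1), of x B us u] by simp
qed

lemma base_subset_kspan:
  assumes B: "k_subspace B"
  shows "set us \<subseteq> mcarrier M \<Longrightarrow> B \<subseteq> kspan B us"
proof (induction us)
  case (Cons u us)
  then show ?case using kspan_subset_kspan_Cons[OF B, of us u] by simp
qed simp

lemma set_subset_kspan:
  assumes B: "k_subspace B"
  shows "set us \<subseteq> mcarrier M \<Longrightarrow> set us \<subseteq> kspan B us"
proof (induction us)
  case (Cons u us)
  have "\<zero>\<^sub>M \<in> kspan B us" using k_subspace_kspan[OF B] Cons unfolding k_subspace_def by auto
  then have "u \<cdot> \<one>\<^bsub>A\<^esub> +\<^sub>M \<zero>\<^sub>M \<in> kspan B (u # us)" using kspan_ConsI[OF k_closed(2)] by blast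
  then have "u \<in> kspan B (u # us)" using Cons by simp
  then show ?case using Cons kspan_subset_kspan_Cons[OF B] by auto
qed simp

lemma kspan_least:
  assumes W: "k_subspace W" and "B \<subseteq> W" "set us \<subseteq> W"
  shows "kspan B us \<subseteq> W"
  using assms(3)
proof (induction us)
  case (Cons u us)
  show ?case
  proof
    fix x assume "x \<in> kspan B (u # us)"
    then obtain c v where "c \<in> k" "v \<in> kspan B us" "x = u \<cdot> c +\<^sub>M v" by (rule kspan_ConsE)
    then show "x \<in> W" using Cons W unfolding k_subspace_def by auto
  qed
qed (use assms in simp)

lemma kspan_mono: "B \<subseteq> B' \<Longrightarrow> kspan B us \<subseteq> kspan B' us"
proof (induction us)
  case (Cons u us)
  then show ?case unfolding kspan.simps(2) by blast
qed simp

lemma kspan_exchange: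
  assumes B: "k_subspace B" and "set us \<subseteq> mcarrier M" and "x \<in> kspan B us" and "x \<notin> B"
  shows "\<exists>as u bs. us = as @ u # bs \<and> u \<in> kspan (kspan B [x]) (as @ bs)"
  using assms(2,3)
proof (induction us)
  case Nil
  then show ?case using \<open>x \<notin> B\<close> by simp
next
  case (Cons u us)
  have uM: "u \<in> mcarrier M" and usM: "set us \<subseteq> mcarrier M" using Cons.prems by auto
  have xM: "x \<in> mcarrier M" using Cons.prems kspan_subset_carrier[OF B] by blast
  have Bx: "k_subspace (kspan B [x])" using k_subspace_kspan[OF B] xM by simp
  obtain c v where cv: "c \<in> k" "v \<in> kspan B us" "x = u \<cdot> c +\<^sub>M v"
    using Cons.prems(2) by (rule kspan_ConsE)
  have vM: "v \<in> mcarrier M" using cv kspan_subset_carrier[OF B usM] by blast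
  show ?case
  proof (cases "c = \<zero>\<^bsub>A\<^esub>")
    case True
    then have "x = v" using cv uM vM by simp
    then obtain as w bs where h: "us = as @ w # bs" "w \<in> kspan (kspan B [x]) (as @ bs)"
      using Cons.IH usM cv by blast
    have "set (as @ bs) \<subseteq> mcarrier M" using usM h by auto
    then have "w \<in> kspan (kspan B [x]) (u # as @ bs)"
      using kspan_subset_kspan_Cons[OF Bx _ uM] h by blast
    then show ?thesis using h by (metis Cons_eq_appendI)
  next
    case False
    interpret R: ring A by (rule ring)
    define c' where "c' = inv\<^bsub>A\<^esub> c"
    have c': "c' \<in> k" "c \<otimes>\<^bsub>A\<^esub> c' = \<one>\<^bsub>A\<^esub>"
      using R.subfield_m_inv[OF subfield, of c] False cv unfolding c'_def by auto
    have cA: "c' \<in> carrier A" "c \<in> carrier A" using c' cv k_subset by auto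
    have "x \<cdot> c' = u +\<^sub>M v \<cdot> c'"
      using cv uM vM cA c' by (simp add: add_act_distrib flip: act_mult)
    then have u: "u = x \<cdot> c' +\<^sub>M v \<cdot> (\<ominus>\<^bsub>A\<^esub> c')"
      using uM vM cA act_add_act_uminus[OF vM cA(1)] by (simp add: add_assoc)
    let ?L = "kspan (kspan B [x]) us"
    have L: "k_subspace ?L" using k_subspace_kspan[OF Bx usM] .
    have "x \<cdot> c' +\<^sub>M \<zero>\<^sub>M \<in> kspan B [x]"
      using kspan_ConsI[OF c'(1)] B unfolding k_subspace_def by simp
    then have "x \<cdot> c' \<in> ?L" using base_subset_kspan[OF Bx usM] xM cA by auto
    moreover have "B \<subseteq> kspan B [x]" using base_subset_kspan[OF B] xM by simp
    then have "v \<in> ?L" using kspan_mono cv by blast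
    then have "v \<cdot> (\<ominus>\<^bsub>A\<^esub> c') \<in> ?L" using L k_closed(3)[OF c'(1)] unfolding k_subspace_def by blast
    ultimately have "u \<in> ?L" using u L unfolding k_subspace_def by metis
    then show ?thesis by (metis append_Nil)
  qed
qed

definition spans_mod :: "'m set \<Rightarrow> 'm list \<Rightarrow> bool" where
  "spans_mod N us \<longleftrightarrow> set us \<subseteq> mcarrier M \<and> kspan N us = mcarrier M"

text \<open>The dimension of \<open>M/N\<close> over \<open>k\<close>; junk value \<open>0\<close> when there is no finite spanning list.\<close>

definition codim :: "'m set \<Rightarrow> nat" where
  "codim N = (LEAST m. \<exists>us. length us = m \<and> spans_mod N us)"

lemma spans_mod_mono:
  assumes "k_subspace N'" "N \<subseteq> N'" "spans_mod N us"
  shows "spans_mod N' us"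
  using kspan_mono[OF assms(2), of us] kspan_subset_carrier[OF assms(1)] assms(3)
  unfolding spans_mod_def by blast

lemma codim_less:
  assumes N: "k_subspace N" and N': "k_subspace N'" and NN': "N \<subset> N'"
    and fin: "\<exists>us. spans_mod N us"
  shows "codim N' < codim N"
proof -
  obtain us where us: "length us = codim N" "spans_mod N us"
    using LeastI_ex[of "\<lambda>m. \<exists>us. length us = m \<and> spans_mod N us"] fin
    unfolding codim_def by blast
  have usM: "set us \<subseteq> mcarrier M" and span: "kspan N us = mcarrier M"
    using us unfolding spans_mod_def by auto
  obtain x where x: "x \<in> N'" "x \<notin> N" using NN' by blast
  then have "x \<in> kspan N us" using N' span unfolding k_subspace_def by blast
  then obtain as u bs where e: "us = as @ u # bs" "u \<in> kspan (kspan N [x]) (as @ bs)"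
    using kspan_exchange[OF N usM _ x(2)] by blast
  let ?vs = "as @ bs"
  have vsM: "set ?vs \<subseteq> mcarrier M" using usM e by auto
  have "kspan N [x] \<subseteq> N'" using kspan_least[OF N', of N "[x]"] NN' x by auto
  then have "u \<in> kspan N' ?vs" using kspan_mono e(2) by blast
  then have "set us \<subseteq> kspan N' ?vs" using set_subset_kspan[OF N' vsM] e by auto
  moreover have "N \<subseteq> kspan N' ?vs" using base_subset_kspan[OF N' vsM] NN' by blast
  ultimately have "kspan N us \<subseteq> kspan N' ?vs"
    using kspan_least[OF k_subspace_kspan[OF N' vsM]] by blast
  then have "spans_mod N' ?vs"
    using span kspan_subset_carrier[OF N' vsM] vsM unfolding spans_mod_def by blast
  then have "codim N' \<le> length ?vs" unfolding codim_def by (blast intro: Least_le)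
  also have "\<dots> < codim N" using e us by simp
  finally show ?thesis .
qed

lemma spans_mod_submod:
  assumes fin: "\<exists>us. spans_mod {\<zero>\<^sub>M} us" and L: "submod A M L"
  shows "\<exists>us. spans_mod L us"
proof -
  obtain us where "spans_mod {\<zero>\<^sub>M} us" using fin by blast
  moreover have "{\<zero>\<^sub>M} \<subseteq> L" using submodD(2)[OF L] by simp
  ultimately have "spans_mod L us" using spans_mod_mono[OF submod_k_subspace[OF L]] by blast
  then show ?thesis ..
qed

lemma codim_less_submod:
  assumes fin: "\<exists>us. spans_mod {\<zero>\<^sub>M} us" and "submod A M N" "submod A M P" "N \<subset> P"
  shows "codim P < codim N"
  using codim_less[OF submod_k_subspace[OF assms(2)] submod_k_subspace[OF assms(3)] assms(4)
      spans_mod_submod[OF fin assms(2)]] .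

lemma simple_extension_exists:
  assumes fin: "\<exists>us. spans_mod {\<zero>\<^sub>M} us" and N: "submod A M N" and proper: "N \<noteq> mcarrier M"
  obtains P where "submod A M P" "N \<subset> P" "simple_mod A (quot (restr M P) N)"
proof -
  define S where "S = {P. submod A M P \<and> N \<subset> P}"
  have "codim ` S \<subseteq> {..<codim N}"
    using codim_less_submod[OF fin N] unfolding S_def by auto
  then have fin_S: "finite (codim ` S)" by (rule finite_subset) simp
  have "N \<subset> mcarrier M" using submodD(1)[OF N] proper by blast
  then have "mcarrier M \<in> S" using submod_carrier unfolding S_def by simp
  then have "Max (codim ` S) \<in> codim ` S" using Max_in[OF fin_S] by blast
  then obtain P where P: "P \<in> S" "codim P = Max (codim ` S)" by (metis imageE)
  have maximal: "R = N \<or> R = P" if R: "submod A M R" "N \<subseteq> R" "R \<subseteq> P" for R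
  proof (rule ccontr)
    assume "\<not> (R = N \<or> R = P)"
    then have "R \<in> S" "R \<subset> P" using R unfolding S_def by auto
    have "codim R \<le> codim P" using P(2) fin_S \<open>R \<in> S\<close> by simp
    moreover have "codim P < codim R"
      using codim_less_submod[OF fin R(1) _ \<open>R \<subset> P\<close>] P(1) unfolding S_def by blast
    ultimately show False by simp
  qed
  have "submod A M P" "N \<subset> P" using P(1) unfolding S_def by auto
  with simple_quot_if_maximal[OF N this maximal] show ?thesis using that by blast
qed

lemma comp_series_from:
  assumes fin: "\<exists>us. spans_mod {\<zero>\<^sub>M} us"
  shows "submod A M N \<Longrightarrow> \<exists>c n. c 0 = N \<and> c n = mcarrier M \<and> (\<forall>i\<le>n. submod A M (c i))
     \<and> (\<forall>i<n. c i \<subseteq> c (Suc i) \<and> simple_mod A (quot (restr M (c (Suc i))) (c i)))"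
proof (induction "codim N" arbitrary: N rule: less_induct)
  case less
  show ?case
  proof (cases "N = mcarrier M")
    case True
    then show ?thesis using submod_carrier by (intro exI[of _ "\<lambda>_. N"] exI[of _ 0]) simp
  next
    case False
    with simple_extension_exists[OF fin less.prems]
    obtain P where P: "submod A M P" "N \<subset> P" "simple_mod A (quot (restr M P) N)" .
    have "codim P < codim N" by (rule codim_less_submod[OF fin less.prems P(1,2)])
    then obtain c n where c: "c 0 = P" "c n = mcarrier M" "\<forall>i\<le>n. submod A M (c i)"
      "\<forall>i<n. c i \<subseteq> c (Suc i) \<and> simple_mod A (quot (restr M (c (Suc i))) (c i))"
      using less.hyps[OF _ P(1)] by blast
    define c' where "c' = (\<lambda>i. case i of 0 \<Rightarrow> N | Suc j \<Rightarrow> c j)"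
    have "c' 0 = N" "c' (Suc n) = mcarrier M" unfolding c'_def using c by simp_all
    moreover have "\<forall>i\<le>Suc n. submod A M (c' i)"
      unfolding c'_def using c(3) less.prems by (auto split: nat.split)
    moreover have "\<forall>i<Suc n. c' i \<subseteq> c' (Suc i) \<and> simple_mod A (quot (restr M (c' (Suc i))) (c' i))"
    proof (intro allI impI)
      fix i assume "i < Suc n"
      then show "c' i \<subseteq> c' (Suc i) \<and> simple_mod A (quot (restr M (c' (Suc i))) (c' i))"
        using c(1,4) P unfolding c'_def by (cases i) auto
    qed
    ultimately show ?thesis by (intro exI[of _ c'] exI[of _ "Suc n"]) simp
  qed
qed

lemma comp_series_exists:
  assumes "\<exists>us. spans_mod {\<zero>\<^sub>M} us"
  obtains c n where "comp_series A M c n"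
  using comp_series_from[OF assms submod_zero] that unfolding comp_series_def by blast

lemma kspan_subset_kspan:
  assumes B: "k_subspace B" and ys: "set ys \<subseteq> mcarrier M" and "set xs \<subseteq> set ys"
  shows "kspan B xs \<subseteq> kspan B ys"
proof -
  have "set xs \<subseteq> kspan B ys" using set_subset_kspan[OF B ys] assms(3) by blast
  then show ?thesis
    using kspan_least[OF k_subspace_kspan[OF B ys] base_subset_kspan[OF B ys]] by blast
qed

text \<open>Centrality of \<open>k\<close> lets scalars from \<open>k\<close> pass through elements of \<open>A\<close>.\<close>

lemma act_Span_in_kspan:
  assumes central: "\<forall>c\<in>k. \<forall>a\<in>carrier A. c \<otimes>\<^bsub>A\<^esub> a = a \<otimes>\<^bsub>A\<^esub> c"
    and x: "x \<in> mcarrier M" and us: "set us \<subseteq> carrier A"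
  shows "a \<in> ring.Span A k us \<Longrightarrow> x \<cdot> a \<in> kspan {\<zero>\<^sub>M} (map (\<lambda>u. x \<cdot> u) us)"
  using us
proof (induction us arbitrary: a)
  case Nil
  interpret R: ring A by (rule ring)
  show ?case using x Nil by simp
next
  case (Cons u us)
  interpret R: ring A by (rule ring)
  have "a \<in> R.line_extension k u (R.Span k us)" using Cons.prems(1) by simp
  then obtain c v where cv: "c \<in> k" "v \<in> R.Span k us" "a = c \<otimes>\<^bsub>A\<^esub> u \<oplus>\<^bsub>A\<^esub> v"
    unfolding R.line_extension_mem_iff by blast
  have uA: "u \<in> carrier A" and usA: "set us \<subseteq> carrier A" using Cons.prems by auto
  have vA: "v \<in> carrier A" using R.Span_in_carrier[OF k_subset usA] cv by blast
  have cA: "c \<in> carrier A" using cv k_subset by blast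
  have "x \<cdot> a = x \<cdot> (c \<otimes>\<^bsub>A\<^esub> u) +\<^sub>M x \<cdot> v" using cv x uA vA cA by (simp add: act_add_distrib)
  also have "c \<otimes>\<^bsub>A\<^esub> u = u \<otimes>\<^bsub>A\<^esub> c" using central cv uA by blast
  also have "x \<cdot> (u \<otimes>\<^bsub>A\<^esub> c) = (x \<cdot> u) \<cdot> c" using x uA cA by (simp add: act_mult)
  finally have "x \<cdot> a = (x \<cdot> u) \<cdot> c +\<^sub>M x \<cdot> v" .
  moreover have "x \<cdot> v \<in> kspan {\<zero>\<^sub>M} (map (\<lambda>u. x \<cdot> u) us)" using Cons.IH[OF _ usA] cv by blast
  ultimately show ?case using kspan_ConsI[OF cv(1)] by simp
qed

lemma kspan_act_closed:
  assumes central: "\<forall>c\<in>k. \<forall>a\<in>carrier A. c \<otimes>\<^bsub>A\<^esub> a = a \<otimes>\<^bsub>A\<^esub> c"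
    and W: "k_subspace W" and vs: "set vs \<subseteq> mcarrier M"
    and gen: "\<forall>u\<in>set vs. \<forall>a\<in>carrier A. u \<cdot> a \<in> W"
  shows "x \<in> kspan {\<zero>\<^sub>M} vs \<Longrightarrow> a \<in> carrier A \<Longrightarrow> x \<cdot> a \<in> W"
  using vs gen
proof (induction vs arbitrary: x)
  case Nil
  then show ?case using W unfolding k_subspace_def by simp
next
  case (Cons u vs)
  from Cons.prems(1) obtain c v where cv: "c \<in> k" "v \<in> kspan {\<zero>\<^sub>M} vs" "x = u \<cdot> c +\<^sub>M v"
    by (rule kspan_ConsE)
  have uM: "u \<in> mcarrier M" and vsM: "set vs \<subseteq> mcarrier M" using Cons.prems by auto
  have vM: "v \<in> mcarrier M" using kspan_subset_carrier[OF k_subspace_zero vsM] cv by blast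
  have a: "a \<in> carrier A" and cA: "c \<in> carrier A" using Cons.prems cv k_subset by auto
  have "x \<cdot> a = u \<cdot> (c \<otimes>\<^bsub>A\<^esub> a) +\<^sub>M v \<cdot> a"
    using cv uM vM a cA by (simp add: add_act_distrib act_mult)
  also have "c \<otimes>\<^bsub>A\<^esub> a = a \<otimes>\<^bsub>A\<^esub> c" using central cv a by blast
  also have "u \<cdot> (a \<otimes>\<^bsub>A\<^esub> c) = (u \<cdot> a) \<cdot> c" using uM a cA by (simp add: act_mult)
  finally have xa: "x \<cdot> a = (u \<cdot> a) \<cdot> c +\<^sub>M v \<cdot> a" .
  have "(u \<cdot> a) \<cdot> c \<in> W" using Cons.prems(4) a W cv(1) unfolding k_subspace_def by simp
  moreover have "v \<cdot> a \<in> W" using Cons.IH[OF cv(2) a vsM] Cons.prems(4) by simp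
  ultimately show ?case unfolding xa using W unfolding k_subspace_def by blast
qed

lemma spans_mod_zero_if_fin_gen:
  assumes central: "\<forall>c\<in>k. \<forall>a\<in>carrier A. c \<otimes>\<^bsub>A\<^esub> a = a \<otimes>\<^bsub>A\<^esub> c"
    and fd: "ring.finite_dimension A k (carrier A)" and fg: "fin_gen A M"
  shows "\<exists>us. spans_mod {\<zero>\<^sub>M} us"
proof -
  interpret R: ring A by (rule ring)
  obtain Us where Us: "set Us \<subseteq> carrier A" "R.Span k Us = carrier A"
    using fd R.exists_base[OF subfield] unfolding R.finite_dimension_def by blast
  obtain G where G: "finite G" "G \<subseteq> mcarrier M"
    and genM: "\<And>N. submod A M N \<Longrightarrow> G \<subseteq> N \<Longrightarrow> N = mcarrier M"
    using fg unfolding fin_gen_def by blast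
  obtain gs where gs: "set gs = G" using finite_list[OF G(1)] by blast
  define us where "us = concat (map (\<lambda>g. map (\<lambda>u. g \<cdot> u) Us) gs)"
  have usM: "set us \<subseteq> mcarrier M" unfolding us_def using G(2) gs Us(1) by (auto intro!: act_closed)
  define T where "T = kspan {\<zero>\<^sub>M} us"
  have T: "k_subspace T" unfolding T_def using k_subspace_kspan[OF k_subspace_zero usM] .
  have gT: "g \<cdot> a \<in> T" if g: "g \<in> G" and a: "a \<in> carrier A" for g a
  proof -
    have "set (map (\<lambda>u. g \<cdot> u) Us) \<subseteq> set us" using g gs unfolding us_def by auto
    then have "kspan {\<zero>\<^sub>M} (map (\<lambda>u. g \<cdot> u) Us) \<subseteq> T"
      unfolding T_def using kspan_subset_kspan[OF k_subspace_zero usM] by blast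
    then show ?thesis using act_Span_in_kspan[OF central _ Us(1)] Us(2) G(2) g a by blast
  qed
  have "submod A M T" unfolding submod_def
  proof (intro conjI ballI)
    show "T \<subseteq> mcarrier M" "\<zero>\<^sub>M \<in> T" using T unfolding k_subspace_def by auto
    show "x +\<^sub>M y \<in> T" if "x \<in> T" "y \<in> T" for x y using T that unfolding k_subspace_def by blast
    have "\<forall>u\<in>set us. \<forall>a\<in>carrier A. u \<cdot> a \<in> T"
    proof (intro ballI)
      fix u a assume u: "u \<in> set us" and a: "a \<in> carrier A"
      then obtain g w where gw: "g \<in> G" "w \<in> set Us" "u = g \<cdot> w" unfolding us_def using gs by auto
      moreover have "g \<in> mcarrier M" "w \<in> carrier A" using gw G(2) Us(1) by auto
      ultimately have "u \<cdot> a = g \<cdot> (w \<otimes>\<^bsub>A\<^esub> a)" using a by (simp add: act_mult)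
      then show "u \<cdot> a \<in> T" using gT gw Us(1) a by auto
    qed
    then show "x \<cdot> a \<in> T" if "x \<in> T" "a \<in> carrier A" for x a
      using kspan_act_closed[OF central T usM] that unfolding T_def by blast
  qed
  moreover have "G \<subseteq> T"
  proof
    fix g assume "g \<in> G"
    then have "g \<cdot> \<one>\<^bsub>A\<^esub> \<in> T" "g \<in> mcarrier M" using gT G(2) by auto
    then show "g \<in> T" by simp
  qed
  ultimately have "T = mcarrier M" using genM by blast
  then show ?thesis unfolding spans_mod_def T_def using usM by blast
qed

end

section \<open>Duals along perfect exact sequences\<close>

lemma dual_zero_elem_in_dual:
  assumes "rmodule A M"
  shows "dual_zero_elem A M \<in> dual A M"
proof -
  interpret right_module A M by (rule right_module.intro[OF assms])
  interpret R: ring A by (rule ring)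
  show ?thesis
    unfolding dual_def dual_zero_elem_def rhom_def regmod_def by simp
qed

lemma dual_is_zero_iff:
  "rmodule A M \<Longrightarrow> dual_is_zero A M \<longleftrightarrow> dual A M \<subseteq> {dual_zero_elem A M}"
  unfolding dual_is_zero_def using dual_zero_elem_in_dual by blast

lemma dual_is_zero_trivial:
  assumes M: "rmodule A M" and trivial: "mcarrier M = {mzero M}"
  shows "dual_is_zero A M"
  unfolding dual_is_zero_iff[OF M]
proof
  interpret right_module A M by (rule right_module.intro[OF M])
  interpret R: ring A by (rule ring)
  fix f assume f: "f \<in> dual A M"
  then have "\<forall>x\<in>mcarrier M. f x \<in> carrier A"
    and "\<forall>x\<in>mcarrier M. \<forall>y\<in>mcarrier M. f (x +\<^sub>M y) = f x \<oplus>\<^bsub>A\<^esub> f y"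
    unfolding dual_def rhom_def regmod_def by simp_all
  then have "f \<zero>\<^sub>M \<in> carrier A" and "f \<zero>\<^sub>M = f \<zero>\<^sub>M \<oplus>\<^bsub>A\<^esub> f \<zero>\<^sub>M"
    using zero_closed add_zero_left[OF zero_closed] by metis+
  then have "f (\<zero>\<^sub>M) = \<zero>\<^bsub>A\<^esub>" by simp
  moreover have "f \<in> extensional {\<zero>\<^sub>M}" using f trivial unfolding dual_def by simp
  ultimately show "f \<in> {dual_zero_elem A M}"
    using trivial unfolding dual_zero_elem_def by (auto simp: extensional_def)
qed

lemma dual_map_dual_zero_elem:
  "rhom A X Y f \<Longrightarrow> dual_map X f (dual_zero_elem A Y) = dual_zero_elem A X"
  unfolding dual_map_def dual_zero_elem_def rhom_def by (auto simp: restrict_def)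

lemma perfect_exactD:
  assumes "perfect_exact A X Y Z f g"
  shows "rhom A X Y f" "rhom A Y Z g" "inj_on (dual_map Y g) (dual A Z)"
    "dual_map Y g ` dual A Z = {\<psi> \<in> dual A Y. dual_map X f \<psi> = dual_zero_elem A X}"
    "dual_map X f ` dual A Y = dual A X"
  using assms unfolding perfect_exact_def short_exact_def by simp_all

lemma perfect_exact_dual_is_zero_left:
  assumes pe: "perfect_exact A X Y Z f g" and Y: "dual_is_zero A Y"
  shows "dual_is_zero A X"
proof -
  have "dual A X = {dual_map X f (dual_zero_elem A Y)}"
    using perfect_exactD(5)[OF pe] Y unfolding dual_is_zero_def by simp
  then show ?thesis
    unfolding dual_is_zero_def dual_map_dual_zero_elem[OF perfect_exactD(1)[OF pe]] .
qed

lemma perfect_exact_dual_is_zero_right: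
  assumes pe: "perfect_exact A X Y Z f g" and Y: "dual_is_zero A Y" and Z: "rmodule A Z"
  shows "dual_is_zero A Z"
  unfolding dual_is_zero_iff[OF Z]
proof
  fix \<phi> assume \<phi>: "\<phi> \<in> dual A Z"
  have zero: "dual_zero_elem A Z \<in> dual A Z" using dual_zero_elem_in_dual[OF Z] .
  have "dual_map Y g ` dual A Z \<subseteq> dual A Y" using perfect_exactD(4)[OF pe] by blast
  then have "dual_map Y g \<phi> \<in> dual A Y" "dual_map Y g (dual_zero_elem A Z) \<in> dual A Y"
    using \<phi> zero by blast+
  then have "dual_map Y g \<phi> = dual_map Y g (dual_zero_elem A Z)"
    using Y unfolding dual_is_zero_def by simp
  then show "\<phi> \<in> {dual_zero_elem A Z}"
    using inj_onD[OF perfect_exactD(3)[OF pe] _ \<phi> zero] by simp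
qed

lemma perfect_exact_dual_is_zero_middle:
  assumes pe: "perfect_exact A X Y Z f g" and X: "dual_is_zero A X" and Z: "dual_is_zero A Z"
    and Y: "rmodule A Y"
  shows "dual_is_zero A Y"
  unfolding dual_is_zero_iff[OF Y]
proof
  fix \<phi> assume \<phi>: "\<phi> \<in> dual A Y"
  have "dual_map X f \<phi> \<in> dual A X" using perfect_exactD(5)[OF pe] \<phi> by blast
  then have "dual_map X f \<phi> = dual_zero_elem A X" using X unfolding dual_is_zero_def by simp
  then have "\<phi> \<in> dual_map Y g ` dual A Z" using perfect_exactD(4)[OF pe] \<phi> by blast
  then have "\<phi> = dual_map Y g (dual_zero_elem A Z)" using Z unfolding dual_is_zero_def by simp
  also have "\<dots> = dual_zero_elem A Y"
    using dual_map_dual_zero_elem[OF perfect_exactD(2)[OF pe]] .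
  finally show "\<phi> \<in> {dual_zero_elem A Y}" by simp
qed

section \<open>Perfect composition series\<close>

lemma simple_mod_fin_gen:
  assumes "simple_mod A S"
  shows "fin_gen A S"
proof -
  have "mzero S \<in> mcarrier S" "mcarrier S \<noteq> {mzero S}"
    using assms unfolding simple_mod_def rmodule_def by blast+
  then obtain x where "x \<in> mcarrier S" "x \<noteq> mzero S" by blast
  then have "\<forall>N. submod A S N \<and> {x} \<subseteq> N \<longrightarrow> N = mcarrier S"
    using assms unfolding simple_mod_def by blast
  then show ?thesis unfolding fin_gen_def using \<open>x \<in> mcarrier S\<close> by blast
qed

lemma modA_simple: "simple_mod A S \<Longrightarrow> modA A S"
  unfolding modA_def using simple_mod_fin_gen unfolding simple_mod_def by blast

definition simple_extensions_perfect :: "('a, 'b) ring_scheme \<Rightarrow> ('m, 'a) rmod \<Rightarrow> bool" where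
  "simple_extensions_perfect A M \<longleftrightarrow> (\<forall>N. submod A M N \<longrightarrow>
     (\<forall>(X :: ('m, 'a) rmod) (S :: ('m set, 'a) rmod) f g.
        modA A X \<and> simple_mod A S \<and> modA A S \<and> short_exact A X (restr M N) S f g
        \<longrightarrow> perfect_exact A X (restr M N) S f g))"

context right_module
begin

definition perfect_comp_series :: "(nat \<Rightarrow> 'm set) \<Rightarrow> nat \<Rightarrow> bool" where
  "perfect_comp_series c n \<longleftrightarrow> comp_series A M c n \<and> (\<forall>i<n.
     perfect_exact A (restr M (c i)) (restr M (c (Suc i))) (quot (restr M (c (Suc i))) (c i))
       id (coset (c i)))"

lemma perfect_comp_seriesI:
  assumes H: "simple_extensions_perfect A M" and c: "comp_series A M c n"
  shows "perfect_comp_series c n"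
  unfolding perfect_comp_series_def
proof (intro conjI allI impI c)
  fix i assume i: "i < n"
  have N: "submod A M (c i)" and P: "submod A M (c (Suc i))" and NP: "c i \<subseteq> c (Suc i)"
    and simple: "simple_mod A (quot (restr M (c (Suc i))) (c i))"
    using c i unfolding comp_series_def by auto
  have "modA A (restr M (c i))"
    unfolding modA_def using rmodule_restr[OF N] comp_series_fin_gen[OF c] i by simp
  then show "perfect_exact A (restr M (c i)) (restr M (c (Suc i))) (quot (restr M (c (Suc i))) (c i))
       id (coset (c i))"
    using H P simple modA_simple[OF simple] short_exact_quot[OF N P NP]
    unfolding simple_extensions_perfect_def by blast
qed

lemma perfect_comp_series_dual_is_zero_down:
  assumes c: "perfect_comp_series c n" and M: "dual_is_zero A M" and "j \<le> n"
  shows "dual_is_zero A (restr M (c j))"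
  using \<open>j \<le> n\<close>
proof (induction j rule: inc_induct)
  case base
  then show ?case using c M unfolding perfect_comp_series_def comp_series_def by simp
next
  case (step j)
  then show ?case
    using perfect_exact_dual_is_zero_left c unfolding perfect_comp_series_def by blast
qed

lemma perfect_comp_series_factor_dual_is_zero:
  assumes c: "perfect_comp_series c n" and M: "dual_is_zero A M" and i: "i < n"
  shows "dual_is_zero A (quot (restr M (c (Suc i))) (c i))"
proof -
  have "simple_mod A (quot (restr M (c (Suc i))) (c i))"
    using c i unfolding perfect_comp_series_def comp_series_def by blast
  then have "rmodule A (quot (restr M (c (Suc i))) (c i))"
    unfolding simple_mod_def by blast
  moreover have "dual_is_zero A (restr M (c (Suc i)))"
    using perfect_comp_series_dual_is_zero_down[OF c M] i by simp
  ultimately show ?thesis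
    using perfect_exact_dual_is_zero_right c i unfolding perfect_comp_series_def by blast
qed

lemma perfect_comp_series_dual_is_zero_up:
  assumes c: "perfect_comp_series c n"
    and factors: "\<And>i. i < n \<Longrightarrow> dual_is_zero A (quot (restr M (c (Suc i))) (c i))"
    and "j \<le> n"
  shows "dual_is_zero A (restr M (c j))"
  using \<open>j \<le> n\<close>
proof (induction j)
  case 0
  have "c 0 = {\<zero>\<^sub>M}" using c unfolding perfect_comp_series_def comp_series_def by blast
  then show ?case using dual_is_zero_trivial[OF rmodule_restr[OF submod_zero]] by simp
next
  case (Suc j)
  then have j: "j < n" and IH: "dual_is_zero A (restr M (c j))" by simp_all
  have "submod A M (c (Suc j))"
    using c Suc.prems unfolding perfect_comp_series_def comp_series_def by blast
  moreover have "perfect_exact A (restr M (c j)) (restr M (c (Suc j)))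
      (quot (restr M (c (Suc j))) (c j)) id (coset (c j))"
    using c j unfolding perfect_comp_series_def by blast
  ultimately show ?case
    using perfect_exact_dual_is_zero_middle IH factors[OF j] rmodule_restr by blast
qed

lemma dual_is_zero_iff_comp_factor_dual_zero:
  assumes H: "simple_extensions_perfect A M" and c: "comp_series A M c n"
  shows "dual_is_zero A M \<longleftrightarrow> comp_factor_dual_zero A M"
proof
  assume M: "dual_is_zero A M"
  show "comp_factor_dual_zero A M"
    unfolding comp_factor_dual_zero_def
  proof (intro allI impI, elim conjE)
    fix c' n' i assume "comp_series A M c' n'" "i < n'"
    then show "dual_is_zero A (quot (restr M (c' (Suc i))) (c' i))"
      using perfect_comp_series_factor_dual_is_zero[OF perfect_comp_seriesI[OF H] M] by blast
  qed
next
  assume "comp_factor_dual_zero A M"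
  then have "\<And>i. i < n \<Longrightarrow> dual_is_zero A (quot (restr M (c (Suc i))) (c i))"
    using c unfolding comp_factor_dual_zero_def by blast
  then have "dual_is_zero A (restr M (c n))"
    using perfect_comp_series_dual_is_zero_up[OF perfect_comp_seriesI[OF H c]] by blast
  then show "dual_is_zero A M" using c unfolding comp_series_def by simp
qed

end

theorem mainTheorem16:
  fixes k :: "'a set" and A :: "('a, 'b) ring_scheme" and Y :: "('m, 'a) rmod"
  assumes "fd_algebra k A"
    and "modA A Y"
    and "\<forall>Y'. submod A Y Y' \<longrightarrow>
           (\<forall>(X :: ('m, 'a) rmod) (S :: ('m set, 'a) rmod) f g.
              modA A X \<and> simple_mod A S \<and> modA A S
              \<and> short_exact A X (restr Y Y') S f g
              \<longrightarrow> perfect_exact A X (restr Y Y') S f g)"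
  shows "dual_is_zero A Y \<longleftrightarrow> comp_factor_dual_zero A Y"
proof -
  have k: "subfield k A" and central: "\<forall>c\<in>k. \<forall>a\<in>carrier A. c \<otimes>\<^bsub>A\<^esub> a = a \<otimes>\<^bsub>A\<^esub> c"
    and fd: "ring.finite_dimension A k (carrier A)"
    using assms(1) unfolding fd_algebra_def by auto
  have Y: "rmodule A Y" and fg: "fin_gen A Y" using assms(2) unfolding modA_def by auto
  interpret right_module_over_subfield A Y k
    by (intro right_module_over_subfield.intro right_module.intro
        right_module_over_subfield_axioms.intro Y k)
  obtain c n where c: "comp_series A Y c n"
    using comp_series_exists[OF spans_mod_zero_if_fin_gen[OF central fd fg]] .
  have "simple_extensions_perfect A Y"
    using assms(3) unfolding simple_extensions_perfect_def .
  then show ?thesis using dual_is_zero_iff_comp_factor_dual_zero c by blast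
qed

end
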